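(* Let $\Pi$ be a cGAP whose VC rule has size $m$. For each function $\sigma$ assigning to every ground VC-rule instance $B_1(v),\dots,B_m(v)\hookleftarrow A_1(v),\dots,A_m(v)$ of $\Pi$ an index $\sigma(v)\in\{1,\dots,m\}$, let $\Pi'_\sigma$ be the ground GAP consisting of all ground non-VC rules of $\Pi$ together with the rules $B_{\sigma(v)}(v):\mu\leftarrow A_{\sigma(v)}(v):\mu$, one for each ground VC-rule instance. Then an interpretation $I$ is a coherent model of $\Pi$ if and only if there exists such a $\sigma$ with $I=\mathcal{MM}(\Pi'_\sigma)$ and $I$ satisfies every ground VC-rule instance of $\Pi$.
   Context: Fix disjoint sets of unary vertex predicate symbols and binary edge predicate symbols; constants are the vertices of a finite social network. An annotation is an element of $[0,1]$, an annotation variable (ranging over $[0,1]$), or $f(t_1,\dots,t_k)$ for an annotation function symbol $f$ denoting a fixed function $[0,1]^k\to[0,1]$ and annotations $t_i$. An annotated atom is $A:\mu$ with $A$ an atom and $\mu$ an annotation; an annotated (GAP) rule has the form $A_0:f(\mu_1,\dots,\mu_n)\leftarrow A_1:\mu_1,\dots,A_n:\mu_n$ ($n=0$: a fact); a GAP is a finite set of such rules. A vertex choice (VC) rule of size $m$ is $b_1(X),\dots,b_m(X)\hookleftarrow a_1(X),\dots,a_m(X)$ with $a_i,b_i$ vertex predicate symbols; its ground instance for vertex $v$ is $b_1(v),\dots,b_m(v)\hookleftarrow a_1(v),\dots,a_m(v)$. A choice GAP (cGAP) $\Pi$ is a finite set of annotated rules plus exactly one VC rule. An interpretation is a map $I$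 from ground atoms to $[0,1]$, ordered pointwise ($I_1\preceq I_2$ iff $I_1(A)\le I_2(A)$ for all $A$). $I\models A:\mu$ iff $I(A)\ge\mu$; $I$ satisfies a ground annotated rule iff $I(A_0)$ is at least the head annotation or some body annotated atom is not satisfied; $I$ satisfies a ground VC rule $B_1,\dots,B_m\hookleftarrow A_1,\dots,A_m$ iff there is $i$ with $I(B_i)=I(A_i)$ and $I(B_j)=0$ for all $j\neq i$; a non-ground rule is satisfied iff all its ground instances are; a model of $\Pi$ satisfies all its rules. Every GAP $P$ has a unique $\preceq$-minimal model, denoted $\mathcal{MM}(P)$ (the least fixpoint of its immediate-consequence operator). Coherence transform: for an interpretation $I$, ${\rm coh}(\Pi,I)$ is the GAP consisting of all ground non-VC rules of $\Pi$ together with, for each ground VC-rule instance $B_1(v),\dots,B_m(v)\hookleftarrow A_1(v),\dots,A_m(v)$ and each $i$ with $I(A_i(v))>0$ and $I(A_i(v))=I(B_i(v))$, the rule $B_i(v):\mu\leftarrow A_i(v):\mu$. A model $M$ of $\Pi$ is coherent iff $M=\mathcal{MM}({\rm coh}(\Pi,M))$. *)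

theory Defs
  imports Main "HOL.Real"
begin

datatype 'v vterm = TVar nat | TCst 'v

text \<open>Atoms; vertex predicate symbols of type 'vp and edge predicate symbols of
type 'ep (disjoint by typing). 'c is the argument type: 'v vterm for non-ground
atoms, 'v for ground atoms.\<close>
datatype ('vp, 'ep, 'c) atom = VAtom 'vp 'c | EAtom 'ep 'c 'c

text \<open>Annotations: constants, annotation variables, or annotation function
symbols (given directly by the function they denote) applied to annotations.\<close>
datatype annot = AConst real | AVar nat | AFun "real list \<Rightarrow> real" "annot list"

fun aeval :: "(nat \<Rightarrow> real) \<Rightarrow> annot \<Rightarrow> real" where
  "aeval \<nu> (AConst c) = c"
| "aeval \<nu> (AVar n) = \<nu> n"
| "aeval \<nu> (AFun f ts) = f (map (aeval \<nu>) ts)"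

fun wf_annot :: "annot \<Rightarrow> bool" where
  "wf_annot (AConst c) \<longleftrightarrow> 0 \<le> c \<and> c \<le> 1"
| "wf_annot (AVar n) \<longleftrightarrow> True"
| "wf_annot (AFun f ts) \<longleftrightarrow>
     (\<forall>xs. length xs = length ts \<longrightarrow> (\<forall>x\<in>set xs. 0 \<le> x \<and> x \<le> 1)
            \<longrightarrow> 0 \<le> f xs \<and> f xs \<le> 1) \<and> (\<forall>t\<in>set ts. wf_annot t)"

text \<open>Annotated rule  head : hann \<leftarrow> B1 : mu1, ..., Bn : mun  (n = 0: a fact).\<close>
datatype 'a arule = ARule (rhead: 'a) (rhann: annot) (rbody: "('a \<times> annot) list")

type_synonym ('vp, 'ep, 'v) gatom = "('vp, 'ep, 'v) atom"
type_synonym ('vp, 'ep, 'v) grule = "('vp, 'ep, 'v) gatom arule"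
type_synonym ('vp, 'ep, 'v) gap = "('vp, 'ep, 'v) grule set"
type_synonym ('vp, 'ep, 'v) interp = "('vp, 'ep, 'v) gatom \<Rightarrow> real"

text \<open>A cGAP: a finite set of (possibly non-ground) annotated rules plus exactly one
VC rule  b1(X),...,bm(X) \<hookleftarrow> a1(X),...,am(X), given as the list [(b1,a1),...,(bm,am)].\<close>
record ('vp, 'ep, 'v) cgap =
  arules :: "('vp, 'ep, 'v vterm) atom arule set"
  vcrule :: "('vp \<times> 'vp) list"

definition vc_size :: "('vp, 'ep, 'v) cgap \<Rightarrow> nat" where
  "vc_size \<Pi> = length (vcrule \<Pi>)"

definition wf_rule :: "'a arule \<Rightarrow> bool" where
  "wf_rule r \<longleftrightarrow> wf_annot (rhann r) \<and> (\<forall>(B, \<mu>)\<in>set (rbody r). wf_annot \<mu>)"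

definition wf_cgap :: "('vp, 'ep, 'v) cgap \<Rightarrow> bool" where
  "wf_cgap \<Pi> \<longleftrightarrow> finite (arules \<Pi>) \<and> (\<forall>r\<in>arules \<Pi>. wf_rule r)"

fun inst_term :: "(nat \<Rightarrow> 'v) \<Rightarrow> 'v vterm \<Rightarrow> 'v" where
  "inst_term \<theta> (TVar n) = \<theta> n"
| "inst_term \<theta> (TCst c) = c"

definition ground_rule :: "(nat \<Rightarrow> 'v) \<Rightarrow> ('vp, 'ep, 'v vterm) atom arule \<Rightarrow> ('vp, 'ep, 'v) grule" where
  "ground_rule \<theta> r = map_arule (map_atom id id (inst_term \<theta>)) r"

definition ground_rules :: "('vp, 'ep, 'v) cgap \<Rightarrow> ('vp, 'ep, 'v) gap" where
  "ground_rules \<Pi> = {ground_rule \<theta> r | \<theta> r. r \<in> arules \<Pi>}"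

definition is_interp :: "('vp, 'ep, 'v) interp \<Rightarrow> bool" where
  "is_interp I \<longleftrightarrow> (\<forall>A. 0 \<le> I A \<and> I A \<le> 1)"

definition sat_rule :: "('vp, 'ep, 'v) interp \<Rightarrow> ('vp, 'ep, 'v) grule \<Rightarrow> bool" where
  "sat_rule I r \<longleftrightarrow> (\<forall>\<nu>. (\<forall>n. 0 \<le> \<nu> n \<and> \<nu> n \<le> 1) \<longrightarrow>
       (\<forall>(B, \<mu>)\<in>set (rbody r). I B \<ge> aeval \<nu> \<mu>) \<longrightarrow> I (rhead r) \<ge> aeval \<nu> (rhann r))"

definition gap_model :: "('vp, 'ep, 'v) gap \<Rightarrow> ('vp, 'ep, 'v) interp \<Rightarrow> bool" where
  "gap_model P I \<longleftrightarrow> is_interp I \<and> (\<forall>r\<in>P. sat_rule I r)"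

definition MM :: "('vp, 'ep, 'v) gap \<Rightarrow> ('vp, 'ep, 'v) interp" where
  "MM P = (THE M. gap_model P M \<and> (\<forall>I. gap_model P I \<longrightarrow> (\<forall>A. M A \<le> I A)))"

text \<open>Satisfaction of the ground VC-rule instance for vertex v (indices 0-based).\<close>
definition sat_vc_inst :: "('vp, 'ep, 'v) interp \<Rightarrow> ('vp \<times> 'vp) list \<Rightarrow> 'v \<Rightarrow> bool" where
  "sat_vc_inst I vc v \<longleftrightarrow>
     (\<exists>i<length vc. I (VAtom (fst (vc ! i)) v) = I (VAtom (snd (vc ! i)) v) \<and>
        (\<forall>j<length vc. j \<noteq> i \<longrightarrow> I (VAtom (fst (vc ! j)) v) = 0))"

definition cgap_model :: "('vp, 'ep, 'v) cgap \<Rightarrow> ('vp, 'ep, 'v) interp \<Rightarrow> bool" where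
  "cgap_model \<Pi> I \<longleftrightarrow> gap_model (ground_rules \<Pi>) I \<and> (\<forall>v. sat_vc_inst I (vcrule \<Pi>) v)"

definition copy_rule :: "'vp \<Rightarrow> 'vp \<Rightarrow> 'v \<Rightarrow> ('vp, 'ep, 'v) grule" where
  "copy_rule b a v = ARule (VAtom b v) (AVar 0) [(VAtom a v, AVar 0)]"

definition coh :: "('vp, 'ep, 'v) cgap \<Rightarrow> ('vp, 'ep, 'v) interp \<Rightarrow> ('vp, 'ep, 'v) gap" where
  "coh \<Pi> I = ground_rules \<Pi> \<union>
     {copy_rule (fst (vcrule \<Pi> ! i)) (snd (vcrule \<Pi> ! i)) v | v i.
        i < length (vcrule \<Pi>) \<and> I (VAtom (snd (vcrule \<Pi> ! i)) v) > 0 \<and>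
        I (VAtom (snd (vcrule \<Pi> ! i)) v) = I (VAtom (fst (vcrule \<Pi> ! i)) v)}"

definition coherent_model :: "('vp, 'ep, 'v) cgap \<Rightarrow> ('vp, 'ep, 'v) interp \<Rightarrow> bool" where
  "coherent_model \<Pi> M \<longleftrightarrow> cgap_model \<Pi> M \<and> M = MM (coh \<Pi> M)"

text \<open>\<Pi>'_sigma for a choice sigma of an index (0-based, < m) for every vertex.\<close>
definition Pi_sigma :: "('vp, 'ep, 'v) cgap \<Rightarrow> ('v \<Rightarrow> nat) \<Rightarrow> ('vp, 'ep, 'v) gap" where
  "Pi_sigma \<Pi> \<sigma> = ground_rules \<Pi> \<union>
     {copy_rule (fst (vcrule \<Pi> ! \<sigma> v)) (snd (vcrule \<Pi> ! \<sigma> v)) v | v. True}"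

end

theory Submission
  imports Defs
begin

(* Both coherent models and the models described via a choice
   function sigma are least models of ground GAPs, coh(Pi, I) resp. Pi'_sigma.
   Everything reduces to one "transfer" principle for least models: if I is the
   least model of P, I is a model of Q, and the least model of Q is a model of P,
   then I is also the least model of Q.

   Each direction of
   the main theorem is one application of the transfer principle. *)

lemma aeval_bounds:
  assumes "wf_annot t" and "\<forall>n. 0 \<le> \<nu> n \<and> \<nu> n \<le> 1"
  shows "0 \<le> aeval \<nu> t \<and> aeval \<nu> t \<le> 1"
  using assms
proof (induction \<nu> t rule: aeval.induct)
  case (3 \<nu> f ts)
  have "\<forall>x\<in>set (map (aeval \<nu>) ts). 0 \<le> x \<and> x \<le> 1" using 3 by auto
  then show ?case using 3(2) by (simp del: set_map)
qed auto

text \<open>A GAP has bounded heads if its head annotations never exceed 1; this is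
  exactly what makes the constant-1 interpretation a model.\<close>
definition bounded_heads :: "('vp, 'ep, 'v) gap \<Rightarrow> bool" where
  "bounded_heads P \<longleftrightarrow>
     (\<forall>r\<in>P. \<forall>\<nu>. (\<forall>n. 0 \<le> \<nu> n \<and> \<nu> n \<le> 1) \<longrightarrow> aeval \<nu> (rhann r) \<le> 1)"

lemma gap_model_mono: "gap_model P I \<Longrightarrow> P' \<subseteq> P \<Longrightarrow> gap_model P' I"
  unfolding gap_model_def by blast

lemma gap_model_top: "bounded_heads P \<Longrightarrow> gap_model P (\<lambda>_. 1)"
  unfolding bounded_heads_def gap_model_def is_interp_def sat_rule_def by auto

lemma gap_model_INF:
  assumes ne: "\<M> \<noteq> {}" and models: "\<And>I. I \<in> \<M> \<Longrightarrow> gap_model P I"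
  shows "gap_model P (\<lambda>A. INF I\<in>\<M>. I A)"
proof -
  let ?M = "\<lambda>A. INF I\<in>\<M>. I A"
  have bdd: "bdd_below ((\<lambda>I. I A) ` \<M>)" for A
    using models unfolding gap_model_def is_interp_def by (intro bdd_belowI2) blast
  have below: "?M A \<le> I A" if "I \<in> \<M>" for I A
    using cINF_lower[OF bdd that] .
  have above: "x \<le> ?M A" if "\<And>I. I \<in> \<M> \<Longrightarrow> x \<le> I A" for x A
    using cINF_greatest[OF ne that] .
  have "is_interp ?M"
    unfolding is_interp_def
  proof
    fix A
    obtain I where "I \<in> \<M>" using ne by blast
    then have "?M A \<le> 1" using below models order_trans
      unfolding gap_model_def is_interp_def by blast
    moreover have "0 \<le> ?M A"
      using models by (intro above) (auto simp: gap_model_def is_interp_def)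
    ultimately show "0 \<le> ?M A \<and> ?M A \<le> 1" by simp
  qed
  moreover have "sat_rule ?M r" if r: "r \<in> P" for r
    unfolding sat_rule_def
  proof (intro allI impI)
    fix \<nu> assume \<nu>: "\<forall>n. 0 \<le> \<nu> n \<and> \<nu> n \<le> 1"
      and body: "\<forall>(B, \<mu>)\<in>set (rbody r). aeval \<nu> \<mu> \<le> ?M B"
    show "aeval \<nu> (rhann r) \<le> ?M (rhead r)"
    proof (rule above)
      fix I assume I: "I \<in> \<M>"
      have "\<forall>(B, \<mu>)\<in>set (rbody r). aeval \<nu> \<mu> \<le> I B"
        using body below[OF I] by (auto intro: order_trans)
      then show "aeval \<nu> (rhann r) \<le> I (rhead r)"
        using models[OF I] r \<nu> unfolding gap_model_def sat_rule_def by blast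
    qed
  qed
  ultimately show ?thesis unfolding gap_model_def by blast
qed

lemma MM_least_model:
  assumes "bounded_heads P"
  shows "gap_model P (MM P) \<and> (\<forall>I. gap_model P I \<longrightarrow> (\<forall>A. MM P A \<le> I A))"
proof -
  let ?\<M> = "{I. gap_model P I}"
  let ?M = "\<lambda>A. INF I\<in>?\<M>. I A"
  have ne: "?\<M> \<noteq> {}" using gap_model_top[OF assms] by blast
  have model: "gap_model P ?M" by (rule gap_model_INF[OF ne]) simp
  have least: "\<forall>I. gap_model P I \<longrightarrow> (\<forall>A. ?M A \<le> I A)"
    using model unfolding gap_model_def is_interp_def
    by (auto intro!: cINF_lower bdd_belowI2)
  have "\<exists>!M. gap_model P M \<and> (\<forall>I. gap_model P I \<longrightarrow> (\<forall>A. M A \<le> I A))"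
    using model least by (intro ex1I[of _ ?M]) (auto intro!: ext antisym)
  then show ?thesis unfolding MM_def by (rule theI')
qed

lemma MM_model: "bounded_heads P \<Longrightarrow> gap_model P (MM P)"
  using MM_least_model by blast

lemma MM_least: "bounded_heads P \<Longrightarrow> gap_model P I \<Longrightarrow> MM P A \<le> I A"
  using MM_least_model by blast

lemma MM_transfer:
  assumes "bounded_heads P" "bounded_heads Q"
    and I: "I = MM P" and "gap_model Q I" and "gap_model P (MM Q)"
  shows "I = MM Q"
proof (intro ext antisym)
  fix A
  show "MM Q A \<le> I A" using MM_least[OF assms(2,4)] .
  show "I A \<le> MM Q A" unfolding I using MM_least[OF assms(1,5)] .
qed

lemma sat_copy_rule:
  assumes "is_interp I"
  shows "sat_rule I (copy_rule b a v) \<longleftrightarrow> I (VAtom a v) \<le> I (VAtom b v)"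
proof
  assume "sat_rule I (copy_rule b a v)"
  then show "I (VAtom a v) \<le> I (VAtom b v)"
    using assms unfolding sat_rule_def copy_rule_def is_interp_def
    by (auto dest: spec[of _ "\<lambda>_. I (VAtom a v)"])
qed (auto simp: sat_rule_def copy_rule_def)

lemma bounded_heads_ground_rules:
  assumes "wf_cgap \<Pi>"
  shows "bounded_heads (ground_rules \<Pi>)"
  unfolding bounded_heads_def
proof (intro ballI allI impI)
  fix r and \<nu> :: "nat \<Rightarrow> real"
  assume "r \<in> ground_rules \<Pi>" and \<nu>: "\<forall>n. 0 \<le> \<nu> n \<and> \<nu> n \<le> 1"
  then obtain \<theta> r0 where r: "r = ground_rule \<theta> r0" "r0 \<in> arules \<Pi>"
    unfolding ground_rules_def by blast
  have "wf_annot (rhann r0)" using assms r(2) unfolding wf_cgap_def wf_rule_def by blast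
  moreover have "rhann r = rhann r0" using r(1) unfolding ground_rule_def by (cases r0) simp
  ultimately show "aeval \<nu> (rhann r) \<le> 1" using aeval_bounds \<nu> by metis
qed

text \<open>Copy rules have head annotation AVar 0, so they never break boundedness.\<close>
lemma bounded_heads_Pi_sigma: "wf_cgap \<Pi> \<Longrightarrow> bounded_heads (Pi_sigma \<Pi> \<sigma>)"
  using bounded_heads_ground_rules
  unfolding Pi_sigma_def bounded_heads_def copy_rule_def by auto

lemma bounded_heads_coh: "wf_cgap \<Pi> \<Longrightarrow> bounded_heads (coh \<Pi> I)"
  using bounded_heads_ground_rules
  unfolding coh_def bounded_heads_def copy_rule_def by auto

lemma gap_model_Pi_sigma:
  "gap_model (Pi_sigma \<Pi> \<sigma>) J \<longleftrightarrow>
     gap_model (ground_rules \<Pi>) J \<and>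
     (\<forall>v. J (VAtom (snd (vcrule \<Pi> ! \<sigma> v)) v) \<le> J (VAtom (fst (vcrule \<Pi> ! \<sigma> v)) v))"
  unfolding gap_model_def Pi_sigma_def ball_Un by (auto simp: Ball_def sat_copy_rule)

lemma gap_model_coh:
  "gap_model (coh \<Pi> I) J \<longleftrightarrow>
     gap_model (ground_rules \<Pi>) J \<and>
     (\<forall>v i. i < length (vcrule \<Pi>) \<longrightarrow> 0 < I (VAtom (snd (vcrule \<Pi> ! i)) v) \<longrightarrow>
        I (VAtom (snd (vcrule \<Pi> ! i)) v) = I (VAtom (fst (vcrule \<Pi> ! i)) v) \<longrightarrow>
        J (VAtom (snd (vcrule \<Pi> ! i)) v) \<le> J (VAtom (fst (vcrule \<Pi> ! i)) v))"
proof -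
  have "(\<forall>r\<in>coh \<Pi> I. sat_rule J r) \<longleftrightarrow> (\<forall>r\<in>ground_rules \<Pi>. sat_rule J r) \<and>
      (\<forall>v i. i < length (vcrule \<Pi>) \<longrightarrow> 0 < I (VAtom (snd (vcrule \<Pi> ! i)) v) \<longrightarrow>
        I (VAtom (snd (vcrule \<Pi> ! i)) v) = I (VAtom (fst (vcrule \<Pi> ! i)) v) \<longrightarrow>
        sat_rule J (copy_rule (fst (vcrule \<Pi> ! i)) (snd (vcrule \<Pi> ! i)) v))"
    unfolding coh_def by blast
  then show ?thesis unfolding gap_model_def by (auto simp: sat_copy_rule)
qed

definition vc_witness ::
    "('vp, 'ep, 'v) interp \<Rightarrow> ('vp \<times> 'vp) list \<Rightarrow> 'v \<Rightarrow> nat \<Rightarrow> bool" where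
  "vc_witness I vc v i \<longleftrightarrow> i < length vc \<and>
     I (VAtom (fst (vc ! i)) v) = I (VAtom (snd (vc ! i)) v) \<and>
     (\<forall>j<length vc. j \<noteq> i \<longrightarrow> I (VAtom (fst (vc ! j)) v) = 0)"

lemma vc_witness_choice:
  assumes "\<forall>v. sat_vc_inst I vc v"
  obtains \<sigma> where "\<And>v. vc_witness I vc v (\<sigma> v)"
proof -
  have "\<forall>v. \<exists>i. vc_witness I vc v i"
    using assms unfolding sat_vc_inst_def vc_witness_def by blast
  then show ?thesis using that by metis
qed

text \<open>At most one index is active: if A_j(v) is positive and bounded by B_j(v),
  then j is the witness, since every other head atom is 0.\<close>
lemma vc_witness_unique:
  assumes "vc_witness I vc v i" and "j < length vc"
    and "0 < I (VAtom (snd (vc ! j)) v)"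
    and "I (VAtom (snd (vc ! j)) v) \<le> I (VAtom (fst (vc ! j)) v)"
  shows "j = i"
  using assms unfolding vc_witness_def by fastforce

text \<open>A coherent model is the least model of Pi'_sigma for any choice sigma of
  VC witnesses, since coh(Pi, I) is contained in Pi'_sigma.\<close>
lemma coherent_imp_Pi_sigma:
  assumes wf: "wf_cgap \<Pi>" and coherent: "coherent_model \<Pi> I"
    and \<sigma>: "\<And>v. vc_witness I (vcrule \<Pi>) v (\<sigma> v)"
  shows "I = MM (Pi_sigma \<Pi> \<sigma>)"
proof (rule MM_transfer[OF bounded_heads_coh[OF wf] bounded_heads_Pi_sigma[OF wf]])
  show "I = MM (coh \<Pi> I)" using coherent unfolding coherent_model_def by blast
  show "gap_model (Pi_sigma \<Pi> \<sigma>) I"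
    using coherent \<sigma> unfolding gap_model_Pi_sigma coherent_model_def cgap_model_def vc_witness_def
    by simp
  text \<open>Every copy rule of coh(Pi, I) is active, hence chosen by sigma.\<close>
  have "coh \<Pi> I \<subseteq> Pi_sigma \<Pi> \<sigma>"
  proof
    fix r assume "r \<in> coh \<Pi> I"
    then consider "r \<in> ground_rules \<Pi>"
      | v i where "r = copy_rule (fst (vcrule \<Pi> ! i)) (snd (vcrule \<Pi> ! i)) v"
        "i < length (vcrule \<Pi>)" "0 < I (VAtom (snd (vcrule \<Pi> ! i)) v)"
        "I (VAtom (snd (vcrule \<Pi> ! i)) v) = I (VAtom (fst (vcrule \<Pi> ! i)) v)"
      unfolding coh_def by blast
    then show "r \<in> Pi_sigma \<Pi> \<sigma>"
    proof cases
      case (2 v i)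
      then have "i = \<sigma> v" using vc_witness_unique[OF \<sigma>] by simp
      then show ?thesis using 2 unfolding Pi_sigma_def by blast
    qed (simp add: Pi_sigma_def)
  qed
  then show "gap_model (coh \<Pi> I) (MM (Pi_sigma \<Pi> \<sigma>))"
    using gap_model_mono MM_model[OF bounded_heads_Pi_sigma[OF wf]] by blast
qed

lemma Pi_sigma_imp_coherent:
  assumes wf: "wf_cgap \<Pi>" and \<sigma>: "\<And>v. \<sigma> v < length (vcrule \<Pi>)"
    and I: "I = MM (Pi_sigma \<Pi> \<sigma>)"
    and vc: "\<forall>v. sat_vc_inst I (vcrule \<Pi>) v"
  shows "coherent_model \<Pi> I"
proof -
  have "gap_model (Pi_sigma \<Pi> \<sigma>) I"
    unfolding I using MM_model[OF bounded_heads_Pi_sigma[OF wf]] .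
  then have ground: "gap_model (ground_rules \<Pi>) I"
    and I_copy: "\<And>v. I (VAtom (snd (vcrule \<Pi> ! \<sigma> v)) v) \<le> I (VAtom (fst (vcrule \<Pi> ! \<sigma> v)) v)"
    unfolding gap_model_Pi_sigma by blast+
  obtain \<tau> where \<tau>: "\<And>v. vc_witness I (vcrule \<Pi>) v (\<tau> v)"
    using vc_witness_choice[OF vc] by blast
  have I_coh: "gap_model (coh \<Pi> I) I" using ground unfolding gap_model_coh by simp
  let ?J = "MM (coh \<Pi> I)"
  have J: "gap_model (coh \<Pi> I) ?J" using MM_model[OF bounded_heads_coh[OF wf]] .
  have J_below: "?J A \<le> I A" for A using MM_least[OF bounded_heads_coh[OF wf] I_coh] .
  text \<open>The copy rule chosen by sigma at v holds in J: either its body atom is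
    0 in I (hence in J), or it is active in I, so sigma(v) is the witness and
    the rule belongs to coh(Pi, I).\<close>
  have J_copy: "?J (VAtom (snd (vcrule \<Pi> ! \<sigma> v)) v) \<le> ?J (VAtom (fst (vcrule \<Pi> ! \<sigma> v)) v)"
    for v
  proof (cases "I (VAtom (snd (vcrule \<Pi> ! \<sigma> v)) v) = 0")
    case True
    then show ?thesis using J_below[of "VAtom (snd (vcrule \<Pi> ! \<sigma> v)) v"] J
      unfolding gap_model_def is_interp_def by (metis order_trans)
  next
    case False
    then have pos: "0 < I (VAtom (snd (vcrule \<Pi> ! \<sigma> v)) v)"
      using ground unfolding gap_model_def is_interp_def by (metis less_eq_real_def)
    have "\<sigma> v = \<tau> v" using vc_witness_unique[OF \<tau> \<sigma> pos I_copy] .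
    then show ?thesis using J pos \<tau>[of v] \<sigma>[of v]
      unfolding gap_model_coh vc_witness_def by simp
  qed
  have "I = MM (coh \<Pi> I)"
  proof (rule MM_transfer[OF bounded_heads_Pi_sigma[OF wf] bounded_heads_coh[OF wf] I I_coh])
    show "gap_model (Pi_sigma \<Pi> \<sigma>) ?J"
      using J J_copy unfolding gap_model_Pi_sigma gap_model_coh by blast
  qed
  then show ?thesis unfolding coherent_model_def cgap_model_def using ground vc by blast
qed

theorem mainTheorem1:
  fixes \<Pi> :: "('vp, 'ep, 'v::finite) cgap" and I :: "('vp, 'ep, 'v) interp"
  assumes "wf_cgap \<Pi>" and "is_interp I"
  shows "coherent_model \<Pi> I \<longleftrightarrow>
    (\<exists>\<sigma>. (\<forall>v. \<sigma> v < vc_size \<Pi>) \<and> I = MM (Pi_sigma \<Pi> \<sigma>) \<and>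
          (\<forall>v. sat_vc_inst I (vcrule \<Pi>) v))"
proof
  assume coherent: "coherent_model \<Pi> I"
  then have vc: "\<forall>v. sat_vc_inst I (vcrule \<Pi>) v"
    unfolding coherent_model_def cgap_model_def by blast
  then obtain \<sigma> where \<sigma>: "\<And>v. vc_witness I (vcrule \<Pi>) v (\<sigma> v)"
    using vc_witness_choice by blast
  then have "\<forall>v. \<sigma> v < vc_size \<Pi>" unfolding vc_witness_def vc_size_def by blast
  with coherent_imp_Pi_sigma[OF assms(1) coherent \<sigma>] vc
  show "\<exists>\<sigma>. (\<forall>v. \<sigma> v < vc_size \<Pi>) \<and> I = MM (Pi_sigma \<Pi> \<sigma>) \<and>
          (\<forall>v. sat_vc_inst I (vcrule \<Pi>) v)" by blast
next
  assume "\<exists>\<sigma>. (\<forall>v. \<sigma> v < vc_size \<Pi>) \<and> I = MM (Pi_sigma \<Pi> \<sigma>) \<and>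
          (\<forall>v. sat_vc_inst I (vcrule \<Pi>) v)"
  then show "coherent_model \<Pi> I"
    using Pi_sigma_imp_coherent[OF assms(1)] unfolding vc_size_def by blast
qed

end
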